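(* Let $N\ge1$ and let $W$ be the unitary on $\mathbb{C}^2\otimes\mathbb{C}^N$ given by the product (applied right to left) $$W=(H\otimes I_N)\,\check F_N^{2}\,(R\otimes I_N)\,\check F_N^{2}\,(I_2\otimes F_N)\,(H\otimes I_N),$$ where $\check F_N^2=I_N\oplus F_N^2$ is $F_N^2$ applied to the second register conditioned on the first (ancilla) qubit being $1$. Then for every vector $v\in\mathbb{C}^N$, $W(|0\rangle\otimes v)=|0\rangle\otimes A_N v$.
   Context: $F_N=\frac1{\sqrt N}[\omega^{jk}]_{j,k=0,\dots,N-1}$ with $\omega=e^{2\pi i/N}$ is the unitary discrete Fourier transform. The discrete Hartley transform is $A_N=\frac1{\sqrt N}[\mathrm{cas}(2\pi jk/N)]_{j,k=0,\dots,N-1}$ where $\mathrm{cas}(t)=\cos t+\sin t$. $H=\frac1{\sqrt2}\begin{pmatrix}1&1\\1&-1\end{pmatrix}$, $R=\frac12\begin{pmatrix}1-i&1+i\\1+i&1-i\end{pmatrix}$, $I_N$ the identity; $I_N\oplus F_N^2$ is block-diagonal in the basis $|0\rangle\otimes e_k,\ |1\rangle\otimes e_k$. *)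

theory Defs
  imports Complex_Main "Jordan_Normal_Form.Matrix"
begin

(* Kronecker (tensor) product; basis of C^a (x) C^b ordered as index i*b + k for e_i (x) e_k *)
definition kron :: "'a::times mat \<Rightarrow> 'a mat \<Rightarrow> 'a mat" where
  "kron A B = mat (dim_row A * dim_row B) (dim_col A * dim_col B)
     (\<lambda>(i,j). A $$ (i div dim_row B, j div dim_col B) * B $$ (i mod dim_row B, j mod dim_col B))"

definition omega :: "nat \<Rightarrow> complex" where
  "omega N = cis (2 * pi / real N)"

definition DFT :: "nat \<Rightarrow> complex mat" where
  "DFT N = mat N N (\<lambda>(j,k). omega N ^ (j * k) / complex_of_real (sqrt (real N)))"

definition cas :: "real \<Rightarrow> real" where
  "cas t = cos t + sin t"

definition DHT :: "nat \<Rightarrow> complex mat" where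
  "DHT N = mat N N (\<lambda>(j,k). complex_of_real (cas (2 * pi * real j * real k / real N) / sqrt (real N)))"

definition Hgate :: "complex mat" where
  "Hgate = mat_of_rows_list 2 [[1 / complex_of_real (sqrt 2), 1 / complex_of_real (sqrt 2)],
                               [1 / complex_of_real (sqrt 2), - 1 / complex_of_real (sqrt 2)]]"

definition Rgate :: "complex mat" where
  "Rgate = mat_of_rows_list 2 [[(1 - \<i>) / 2, (1 + \<i>) / 2],
                               [(1 + \<i>) / 2, (1 - \<i>) / 2]]"

definition ctrlF2 :: "nat \<Rightarrow> complex mat" where
  "ctrlF2 N = four_block_mat (1\<^sub>m N) (0\<^sub>m N N) (0\<^sub>m N N) (DFT N * DFT N)"

definition Wcirc :: "nat \<Rightarrow> complex mat" where
  "Wcirc N = kron Hgate (1\<^sub>m N) * ctrlF2 N * kron Rgate (1\<^sub>m N) * ctrlF2 N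
             * kron (1\<^sub>m 2) (DFT N) * kron Hgate (1\<^sub>m N)"

end

theory Submission
  imports Defs
begin

(* F_N^2 is the index reversal P x = (x_{-j mod N})_j, an involution. After H and I (x) F_N the
   state is |+> (x) u with u = F_N v. The controlled reversal, R and the controlled reversal again
   map it to |+> (x) w with w = (1-i)/2 u + (1+i)/2 P u: R mixes u and P u, and since P is an
   involution the second reversal makes both halves agree. The last H returns |0> (x) w, and
   w = A_N v because (1-i)/2 e^{it} + (1+i)/2 e^{-it} = cos t + sin t. *)

lemma omega_power: "omega N ^ n = cis (2 * pi * real n / real N)"
  unfolding omega_def DeMoivre by (simp add: field_simps)

lemma omega_power_self: "0 < N \<Longrightarrow> omega N ^ N = 1"
  by (simp add: omega_power)

lemma omega_power_mod:
  assumes "0 < N" shows "omega N ^ (n mod N) = omega N ^ n"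
proof -
  have "omega N ^ n = omega N ^ (N * (n div N) + n mod N)" by simp
  also have "\<dots> = omega N ^ (n mod N)"
    unfolding power_add power_mult omega_power_self[OF assms] by simp
  finally show ?thesis ..
qed

lemma omega_power_eq_1_iff:
  assumes "0 < N" shows "omega N ^ n = 1 \<longleftrightarrow> N dvd n"
proof
  assume "omega N ^ n = 1"
  then have "cis (2 * pi * real (n mod N) / real N) = cis (2 * pi * real 0 / real N)"
    using assms by (simp add: omega_power_mod flip: omega_power)
  then have "n mod N = 0"
    using bij_betw_roots_unity[OF assms] assms by (auto simp: bij_betw_def inj_on_def)
  then show "N dvd n" by presburger
qed (auto simp: power_mult omega_power_self assms)

lemma sum_omega_powers:
  assumes "0 < N"
  shows "(\<Sum>l<N. omega N ^ (m * l)) = (if N dvd m then of_nat N else 0)"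
proof (cases "N dvd m")
  case True
  then have "omega N ^ m = 1" using assms by (simp add: omega_power_eq_1_iff)
  then show ?thesis using True by (simp add: power_mult)
next
  case False
  then have "omega N ^ m \<noteq> 1" using assms by (simp add: omega_power_eq_1_iff)
  moreover have "(omega N ^ m) ^ N = 1"
    using assms by (metis omega_power_self power_mult mult.commute power_one)
  ultimately show ?thesis
    using False geometric_sum[of "omega N ^ m" N] by (simp add: power_mult)
qed

lemma dvd_add_iff_eq_neg_mod:
  fixes j k N :: nat assumes "j < N" "k < N"
  shows "N dvd j + k \<longleftrightarrow> k = (N - j) mod N"
proof
  assume "N dvd j + k"
  then obtain c where c: "j + k = N * c" ..
  then have "N * c < N * 2" using assms by linarith
  then have "c = 0 \<or> c = 1" by auto
  then show "k = (N - j) mod N" using c assms by auto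
next
  assume "k = (N - j) mod N"
  then show "N dvd j + k" using assms by (cases "j = 0") (auto simp: mod_if)
qed

lemma omega_power_neg_mod:
  assumes "j < N"
  shows "omega N ^ ((N - j) mod N * k) = inverse (omega N ^ (j * k))"
proof -
  have "N dvd j + (N - j) mod N" using assms by (simp add: dvd_add_iff_eq_neg_mod)
  then have "N dvd ((N - j) mod N + j) * k" by (simp add: add.commute)
  then have "omega N ^ ((N - j) mod N * k) * omega N ^ (j * k) = 1"
    using assms by (simp add: omega_power_eq_1_iff flip: power_add add_mult_distrib)
  then show ?thesis by (metis inverse_unique mult.commute)
qed

definition neg_index_vec :: "nat \<Rightarrow> 'a vec \<Rightarrow> 'a vec" where
  "neg_index_vec N x = vec N (\<lambda>j. x $ ((N - j) mod N))"

lemma neg_index_vec_carrier [simp]: "neg_index_vec N x \<in> carrier_vec N"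
  and dim_neg_index_vec [simp]: "dim_vec (neg_index_vec N x) = N"
  and index_neg_index_vec [simp]: "j < N \<Longrightarrow> neg_index_vec N x $ j = x $ ((N - j) mod N)"
  by (simp_all add: neg_index_vec_def)

lemma neg_index_vec_involutive:
  assumes "x \<in> carrier_vec N" shows "neg_index_vec N (neg_index_vec N x) = x"
proof (rule eq_vecI)
  fix j assume "j < dim_vec x"
  then have "j < N" using assms by simp
  moreover have "(N - (N - j) mod N) mod N = j" if "j < N"
    using that by (cases "j = 0") (auto simp: mod_if)
  ultimately show "neg_index_vec N (neg_index_vec N x) $ j = x $ j" by simp
qed (use assms in simp)

lemma neg_index_vec_add:
  "x \<in> carrier_vec N \<Longrightarrow> y \<in> carrier_vec N \<Longrightarrow>
    neg_index_vec N (x + y) = neg_index_vec N x + neg_index_vec N y"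
  by (rule eq_vecI) auto

lemma neg_index_vec_smult:
  "x \<in> carrier_vec N \<Longrightarrow> neg_index_vec N (a \<cdot>\<^sub>v x) = a \<cdot>\<^sub>v neg_index_vec N x"
  by (rule eq_vecI) auto

lemma DFT_carrier [simp]: "DFT N \<in> carrier_mat N N"
  and dim_row_DFT [simp]: "dim_row (DFT N) = N"
  and dim_col_DFT [simp]: "dim_col (DFT N) = N"
  and index_DFT:
    "j < N \<Longrightarrow> k < N \<Longrightarrow> DFT N $$ (j, k) = omega N ^ (j * k) / sqrt (real N)"
  by (simp_all add: DFT_def)

lemma index_DFT_mult_vec:
  "x \<in> carrier_vec N \<Longrightarrow> j < N \<Longrightarrow>
    (DFT N *\<^sub>v x) $ j = (\<Sum>k<N. omega N ^ (j * k) / sqrt (real N) * x $ k)"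
  by (simp add: scalar_prod_def index_DFT lessThan_atLeast0)

lemma index_DFT_square:
  assumes "j < N" "k < N"
  shows "(DFT N * DFT N) $$ (j, k) = (if k = (N - j) mod N then 1 else 0)"
proof -
  have sqrt_sq: "complex_of_real (sqrt (real N)) * complex_of_real (sqrt (real N)) = of_nat N"
    by (simp flip: of_real_mult)
  have "(DFT N * DFT N) $$ (j, k)
      = (\<Sum>l<N. omega N ^ (j * l) / sqrt (real N) * (omega N ^ (l * k) / sqrt (real N)))"
    using assms by (simp add: scalar_prod_def index_DFT lessThan_atLeast0)
  also have "\<dots> = (\<Sum>l<N. omega N ^ ((j + k) * l)) / of_nat N"
    by (simp add: sum_divide_distrib power_add algebra_simps flip: sqrt_sq)
  also have "\<dots> = (if N dvd j + k then 1 else 0)"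
    using assms by (simp add: sum_omega_powers)
  finally show ?thesis using assms by (simp add: dvd_add_iff_eq_neg_mod)
qed

lemma DFT_square_mult_vec:
  assumes "x \<in> carrier_vec N" shows "(DFT N * DFT N) *\<^sub>v x = neg_index_vec N x"
proof (rule eq_vecI)
  fix j assume "j < dim_vec (neg_index_vec N x)"
  then have j: "j < N" by simp
  have "((DFT N * DFT N) *\<^sub>v x) $ j = (\<Sum>k<N. (DFT N * DFT N) $$ (j, k) * x $ k)"
    using assms j by (simp add: scalar_prod_def lessThan_atLeast0 del: index_mult_mat(1))
  also have "\<dots> = (\<Sum>k<N. if k = (N - j) mod N then x $ k else 0)"
    using j by (intro sum.cong) (simp_all add: index_DFT_square del: index_mult_mat(1))
  also have "\<dots> = x $ ((N - j) mod N)"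
    using j by simp
  finally show "((DFT N * DFT N) *\<^sub>v x) $ j = neg_index_vec N x $ j" using j by simp
qed simp

lemma cis_combination_eq_cas:
  "(1 - \<i>) / 2 * cis t + (1 + \<i>) / 2 * cis (- t) = complex_of_real (cas t)"
  by (simp add: complex_eq_iff cas_def field_simps)

lemma DHT_mult_vec_eq_DFT_combination:
  assumes v: "v \<in> carrier_vec N"
  shows "DHT N *\<^sub>v v
    = (1 - \<i>) / 2 \<cdot>\<^sub>v (DFT N *\<^sub>v v) + (1 + \<i>) / 2 \<cdot>\<^sub>v neg_index_vec N (DFT N *\<^sub>v v)"
    (is "_ = ?rhs")
proof (rule eq_vecI)
  fix j assume "j < dim_vec ?rhs"
  then have j: "j < N" by simp
  define t where "t k = 2 * pi * real j * real k / real N" for k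
  have DFT_j: "(DFT N *\<^sub>v v) $ j = (\<Sum>k<N. cis (t k) / sqrt (real N) * v $ k)"
    unfolding index_DFT_mult_vec[OF v j] by (simp add: omega_power t_def mult.assoc)
  have neg_DFT_j:
    "neg_index_vec N (DFT N *\<^sub>v v) $ j = (\<Sum>k<N. cis (- t k) / sqrt (real N) * v $ k)"
    using v j by (simp add: index_DFT_mult_vec omega_power_neg_mod del: index_mult_mat_vec)
      (simp add: omega_power cis_inverse t_def mult.assoc)
  have "?rhs $ j
      = (\<Sum>k<N. ((1 - \<i>) / 2 * cis (t k) + (1 + \<i>) / 2 * cis (- t k)) / sqrt (real N) * v $ k)"
    using v j unfolding index_add_vec(1)
    by (simp add: DFT_j neg_DFT_j sum_distrib_left sum.distrib[symmetric] algebra_simps)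
      (rule sum.cong; simp add: field_simps)
  also have "\<dots> = (DHT N *\<^sub>v v) $ j"
    using v j unfolding cis_combination_eq_cas
    by (simp add: t_def DHT_def scalar_prod_def lessThan_atLeast0)
  finally show "(DHT N *\<^sub>v v) $ j = ?rhs $ j" by (rule sym)
qed (simp add: DHT_def)

lemma kron_2x2_eq_four_block_mat:
  assumes A: "A \<in> carrier_mat 2 2" and B: "B \<in> carrier_mat n m"
  shows "kron A B = four_block_mat (A $$ (0, 0) \<cdot>\<^sub>m B) (A $$ (0, 1) \<cdot>\<^sub>m B)
                                   (A $$ (1, 0) \<cdot>\<^sub>m B) (A $$ (1, 1) \<cdot>\<^sub>m B)" (is "_ = ?M")
proof (rule eq_matI)
  fix i j assume "i < dim_row ?M" "j < dim_col ?M"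
  then have "i < n + n" "j < m + m" using B by auto
  then show "kron A B $$ (i, j) = ?M $$ (i, j)"
    using A B by (cases "i < n"; cases "j < m") (auto simp: kron_def le_div_geq le_mod_geq)
qed (use A B in \<open>auto simp: kron_def\<close>)

lemma kron_2x2_carrier:
  "A \<in> carrier_mat 2 2 \<Longrightarrow> B \<in> carrier_mat n m \<Longrightarrow> kron A B \<in> carrier_mat (n + n) (m + m)"
  by (simp add: kron_2x2_eq_four_block_mat)

lemma smult_mat_mult_vec:
  fixes a :: "'a :: comm_semiring_0"
  shows "A \<in> carrier_mat n m \<Longrightarrow> x \<in> carrier_vec m \<Longrightarrow>
    (a \<cdot>\<^sub>m A) *\<^sub>v x = a \<cdot>\<^sub>v (A *\<^sub>v x)"
  by (rule eq_vecI) auto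

lemma kron_2x2_mult_append_vec:
  fixes A :: "'a :: comm_semiring_0 mat"
  assumes A: "A \<in> carrier_mat 2 2" and B: "B \<in> carrier_mat n m"
    and x: "x \<in> carrier_vec m" and y: "y \<in> carrier_vec m"
  shows "kron A B *\<^sub>v (x @\<^sub>v y)
    = (A $$ (0, 0) \<cdot>\<^sub>v (B *\<^sub>v x) + A $$ (0, 1) \<cdot>\<^sub>v (B *\<^sub>v y))
      @\<^sub>v (A $$ (1, 0) \<cdot>\<^sub>v (B *\<^sub>v x) + A $$ (1, 1) \<cdot>\<^sub>v (B *\<^sub>v y))"
  unfolding kron_2x2_eq_four_block_mat[OF A B]
  using B x y by (simp add: four_block_mat_mult_vec[of _ n m _ m _ n] smult_mat_mult_vec)

lemma Hgate_carrier: "Hgate \<in> carrier_mat 2 2"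
  unfolding Hgate_def by (simp add: mat_of_rows_list_def del: One_nat_def) (simp add: numeral_2_eq_2)

lemma Rgate_carrier: "Rgate \<in> carrier_mat 2 2"
  unfolding Rgate_def by (simp add: mat_of_rows_list_def del: One_nat_def) (simp add: numeral_2_eq_2)

lemma index_Hgate:
  "Hgate $$ (0, 0) = 1 / complex_of_real (sqrt 2)" "Hgate $$ (0, 1) = 1 / complex_of_real (sqrt 2)"
  "Hgate $$ (1, 0) = 1 / complex_of_real (sqrt 2)" "Hgate $$ (1, 1) = - 1 / complex_of_real (sqrt 2)"
  unfolding Hgate_def by (simp_all add: mat_of_rows_list_def)

lemma index_Rgate:
  "Rgate $$ (0, 0) = (1 - \<i>) / 2" "Rgate $$ (0, 1) = (1 + \<i>) / 2"
  "Rgate $$ (1, 0) = (1 + \<i>) / 2" "Rgate $$ (1, 1) = (1 - \<i>) / 2"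
  unfolding Rgate_def by (simp_all add: mat_of_rows_list_def)

lemma kron_Hgate_mult_append_zero:
  assumes "x \<in> carrier_vec N"
  shows "kron Hgate (1\<^sub>m N) *\<^sub>v (x @\<^sub>v 0\<^sub>v N)
    = (1 / complex_of_real (sqrt 2) \<cdot>\<^sub>v x) @\<^sub>v (1 / complex_of_real (sqrt 2) \<cdot>\<^sub>v x)"
  using assms
  by (simp add: kron_2x2_mult_append_vec[OF Hgate_carrier one_carrier_mat]
      index_Hgate[unfolded One_nat_def])
    (intro arg_cong2[where f = append_vec] eq_vecI; simp)

lemma kron_Hgate_mult_append_same:
  assumes "x \<in> carrier_vec N"
  shows "kron Hgate (1\<^sub>m N) *\<^sub>v
      ((1 / complex_of_real (sqrt 2) \<cdot>\<^sub>v x) @\<^sub>v (1 / complex_of_real (sqrt 2) \<cdot>\<^sub>v x))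
    = x @\<^sub>v 0\<^sub>v N"
proof -
  have "complex_of_real (sqrt 2) * complex_of_real (sqrt 2) = 2"
    by (simp flip: of_real_mult)
  then show ?thesis
    using assms
    by (simp add: kron_2x2_mult_append_vec[OF Hgate_carrier one_carrier_mat]
        index_Hgate[unfolded One_nat_def])
      (intro arg_cong2[where f = append_vec] eq_vecI; simp add: field_simps)
qed

lemma kron_Rgate_mult_append_vec:
  assumes "x \<in> carrier_vec N" "y \<in> carrier_vec N"
  shows "kron Rgate (1\<^sub>m N) *\<^sub>v (x @\<^sub>v y)
    = ((1 - \<i>) / 2 \<cdot>\<^sub>v x + (1 + \<i>) / 2 \<cdot>\<^sub>v y)
      @\<^sub>v ((1 + \<i>) / 2 \<cdot>\<^sub>v x + (1 - \<i>) / 2 \<cdot>\<^sub>v y)"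
  using assms
  by (simp add: kron_2x2_mult_append_vec[OF Rgate_carrier one_carrier_mat]
      index_Rgate[unfolded One_nat_def])

lemma kron_one_DFT_mult_append_vec:
  assumes "x \<in> carrier_vec N" "y \<in> carrier_vec N"
  shows "kron (1\<^sub>m 2) (DFT N) *\<^sub>v (x @\<^sub>v y) = (DFT N *\<^sub>v x) @\<^sub>v (DFT N *\<^sub>v y)"
  using assms by (simp add: kron_2x2_mult_append_vec[OF one_carrier_mat DFT_carrier])
    (intro arg_cong2[where f = append_vec] eq_vecI; simp)

lemma ctrlF2_mult_append_vec:
  assumes "x \<in> carrier_vec N" "y \<in> carrier_vec N"
  shows "ctrlF2 N *\<^sub>v (x @\<^sub>v y) = x @\<^sub>v neg_index_vec N y"
  unfolding ctrlF2_def using assms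
  by (simp add: mult_mat_vec_split[OF one_carrier_mat mult_carrier_mat[OF DFT_carrier DFT_carrier]]
      DFT_square_mult_vec)

lemma ctrlF2_kron_Rgate_ctrlF2_mult_append_same:
  assumes u: "u \<in> carrier_vec N"
  defines "w \<equiv> (1 - \<i>) / 2 \<cdot>\<^sub>v u + (1 + \<i>) / 2 \<cdot>\<^sub>v neg_index_vec N u"
  shows "ctrlF2 N *\<^sub>v (kron Rgate (1\<^sub>m N) *\<^sub>v (ctrlF2 N *\<^sub>v ((c \<cdot>\<^sub>v u) @\<^sub>v (c \<cdot>\<^sub>v u))))
    = (c \<cdot>\<^sub>v w) @\<^sub>v (c \<cdot>\<^sub>v w)"
proof -
  define w' where "w' = (1 + \<i>) / 2 \<cdot>\<^sub>v u + (1 - \<i>) / 2 \<cdot>\<^sub>v neg_index_vec N u"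
  have "kron Rgate (1\<^sub>m N) *\<^sub>v (ctrlF2 N *\<^sub>v ((c \<cdot>\<^sub>v u) @\<^sub>v (c \<cdot>\<^sub>v u)))
      = (c \<cdot>\<^sub>v w) @\<^sub>v (c \<cdot>\<^sub>v w')"
    using u
    by (simp add: ctrlF2_mult_append_vec kron_Rgate_mult_append_vec neg_index_vec_smult w_def w'_def)
      (intro arg_cong2[where f = append_vec] eq_vecI; simp add: algebra_simps)
  moreover have "neg_index_vec N w' = w"
    using u unfolding w_def w'_def
    by (simp add: neg_index_vec_add neg_index_vec_smult neg_index_vec_involutive comm_add_vec[of _ N])
  ultimately show ?thesis
    using u by (simp add: ctrlF2_mult_append_vec neg_index_vec_smult w_def w'_def)
qed

lemma Wcirc_mult_vec:
  assumes "z \<in> carrier_vec (N + N)"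
  shows "Wcirc N *\<^sub>v z = kron Hgate (1\<^sub>m N) *\<^sub>v (ctrlF2 N *\<^sub>v (kron Rgate (1\<^sub>m N) *\<^sub>v
    (ctrlF2 N *\<^sub>v (kron (1\<^sub>m 2) (DFT N) *\<^sub>v (kron Hgate (1\<^sub>m N) *\<^sub>v z)))))"
proof -
  have "kron Hgate (1\<^sub>m N) \<in> carrier_mat (N + N) (N + N)"
    "kron Rgate (1\<^sub>m N) \<in> carrier_mat (N + N) (N + N)"
    "kron (1\<^sub>m 2) (DFT N) \<in> carrier_mat (N + N) (N + N)"
    "ctrlF2 N \<in> carrier_mat (N + N) (N + N)"
    by (simp_all add: kron_2x2_carrier Hgate_carrier Rgate_carrier ctrlF2_def
        four_block_carrier_mat mult_carrier_mat[OF DFT_carrier DFT_carrier])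
  with assms show ?thesis
    unfolding Wcirc_def
    by (simp add: assoc_mult_mat_vec[of _ "N + N" "N + N" _ "N + N"]
        mult_carrier_mat[of _ "N + N" "N + N" _ "N + N"] mult_mat_vec_carrier[of _ "N + N" "N + N"]
        del: assoc_mult_mat)
qed

theorem mainTheorem6:
  fixes N :: nat and v :: "complex vec"
  assumes "N \<ge> 1" and "v \<in> carrier_vec N"
  shows "Wcirc N *\<^sub>v (v @\<^sub>v 0\<^sub>v N) = (DHT N *\<^sub>v v) @\<^sub>v 0\<^sub>v N"
proof -
  let ?c = "1 / complex_of_real (sqrt 2)" and ?u = "DFT N *\<^sub>v v"
  let ?w = "(1 - \<i>) / 2 \<cdot>\<^sub>v ?u + (1 + \<i>) / 2 \<cdot>\<^sub>v neg_index_vec N ?u"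
  have u: "?u \<in> carrier_vec N" using assms(2) by (rule mult_mat_vec_carrier[OF DFT_carrier])
  have "kron (1\<^sub>m 2) (DFT N) *\<^sub>v (kron Hgate (1\<^sub>m N) *\<^sub>v (v @\<^sub>v 0\<^sub>v N))
      = (?c \<cdot>\<^sub>v ?u) @\<^sub>v (?c \<cdot>\<^sub>v ?u)"
    using assms(2)
    by (simp add: kron_Hgate_mult_append_zero kron_one_DFT_mult_append_vec mult_mat_vec[of _ N N])
  then have "Wcirc N *\<^sub>v (v @\<^sub>v 0\<^sub>v N)
      = kron Hgate (1\<^sub>m N) *\<^sub>v ((?c \<cdot>\<^sub>v ?w) @\<^sub>v (?c \<cdot>\<^sub>v ?w))"
    using assms(2) u by (simp add: Wcirc_mult_vec ctrlF2_kron_Rgate_ctrlF2_mult_append_same)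
  also have "\<dots> = ?w @\<^sub>v 0\<^sub>v N"
    using u by (simp add: kron_Hgate_mult_append_same)
  also have "?w = DHT N *\<^sub>v v"
    using assms(2) by (simp add: DHT_mult_vec_eq_DFT_combination)
  finally show ?thesis .
qed

end
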